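(* Let $(\rho,\mu,\nu)$ be a regular triple of standard representations of $\mathcal{W}_N$ and $R=R(\rho,\mu,\nu)$. Then, as $N^2\times N^2$ matrices, with $Z_1=Z\otimes\mathrm{id}$, $Z_2=\mathrm{id}\otimes Z$, $Y_1=Y\otimes\mathrm{id}$, $Y_2=\mathrm{id}\otimes Y$: $$(C_1)\ R\,Z_1Y_2=Z_1Y_2\,R,\qquad (C_2)\ R\,Y_1=Y_1Y_2\,R,\qquad (C_3)\ R\,Z_1Z_2=Z_2\,R.$$
   Context: $N\ge3$ odd, $N=2P+1$, $\omega=e^{2\pi i/N}$; for integers $r$, $\omega^{r/2}:=(\omega^{P+1})^r$. Indices run over $\mathbb{Z}/N$; $\delta(n)=1$ if $n\equiv0\pmod N$, else $0$. $X_{ij}=\delta(i-j-1)$, $Z_{ij}=\omega^i\delta(i-j)$, $Y=\omega^{1/2}XZ$, i.e. $Y_{ij}=\omega^{1/2+j}\delta(i-j-1)$. $\mathcal{W}_N$: unital $\mathbb{C}$-algebra generated by $E,E^{-1},D$ with $EE^{-1}=E^{-1}E=1$, $ED=\omega DE$, $\Delta(E)=E\otimes E$, $\Delta(D)=E\otimes D+D\otimes1$; tensor products via $\Delta$; cyclic = $E,D$ act invertibly; regular = every tensor product of consecutive terms cyclic. Standard representation with parameters $(a_\rho,y_\rho)\in(\mathbb{C}^* )^2$: $\rho(E)=a_\rho^2Z$, $\rho(D)=a_\rho y_\rho X$. A determination $u\mapsto u^{1/N}$ of the $N$-th root is fixed; $\rho\mu$ has $a_{\rho\mu}=a_\rho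 a_\mu$, $y_{\rho\mu}=(a_\rho^Ny_\mu^N+y_\rho^Na_\mu^{-N})^{1/N}$; products are associative. Standing convention: $-\frac{y_\rho y_\nu}{y_{\rho\mu\nu}y_\mu}=r\big(\frac{y_{\rho\mu}y_{\mu\nu}}{y_{\rho\mu\nu}y_\mu}\big)$. Functions: for $x^N+y^N=z^N$, $\omega(x,y,z|n)=\prod_{j=1}^n\frac{y}{z-x\omega^j}$ ($0\le n\le N-1$), extended $N$-periodically; $\omega(x,y,z|m,n)=\omega(x,y,z|m-n)\omega^{n^2/2}$. $g(x)=\prod_{j=1}^{N-1}(1-x\omega^j)^{j/N}$, $r(x)=(1-x^N)^{1/N}$ (analytic continuations from $0$ to $\mathbb{C}\setminus\{|x|\ge1,\arg x\in\theta+\frac{2\pi}{N}\mathbb{Z}\}$, $\theta$ fixed so $g$ avoids the cuts); $h(x)=x^{-P}g(x)/g(1)$. $6j$-symbol: $R(\rho,\mu,\nu)^{\gamma,\delta}_{\alpha,\beta}=h\big(\frac{y_{\rho\mu}y_{\mu\nu}}{y_{\rho\mu\nu}y_\mu}\big)\omega^{\alpha\delta}\omega(y_{\rho\mu\nu}y_\mu,y_\rho y_\nu,y_{\rho\mu}y_{\mu\nu}|\gamma,\alpha)\delta(\gamma+\delta-\beta)$. Matrix convention: an array $M^{\gamma,\delta}_{\alpha,\beta}$ is the $N^2\times N^2$ matrix with entry $M^{\gamma,\delta}_{\alpha,\beta}$ in row $(\alpha,\beta)$, column $(\gamma,\delta)$; $A\otimes B$ has entry $A_{\alpha\gamma}B_{\beta\delta}$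 there; products are matrix products. *)

theory Defs
  imports "HOL-Analysis.Analysis"
begin

definition omg :: "nat \<Rightarrow> complex" where
  "omg N = cis (2 * pi / real N)"

text \<open>omega^(r/2) := (omega^(P+1))^r for integers r, where N = 2P+1.\<close>
definition half_pow :: "nat \<Rightarrow> int \<Rightarrow> complex" where
  "half_pow N r = (omg N ^ ((N - 1) div 2 + 1)) powi r"

definition dlt :: "nat \<Rightarrow> int \<Rightarrow> complex" where
  "dlt N n = (if n mod int N = 0 then 1 else 0)"

definition mmul :: "'i set \<Rightarrow> ('i \<Rightarrow> 'i \<Rightarrow> complex) \<Rightarrow> ('i \<Rightarrow> 'i \<Rightarrow> complex) \<Rightarrow> ('i \<Rightarrow> 'i \<Rightarrow> complex)" where
  "mmul I A B = (\<lambda>i k. \<Sum>j\<in>I. A i j * B j k)"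

definition madd :: "('i \<Rightarrow> 'i \<Rightarrow> complex) \<Rightarrow> ('i \<Rightarrow> 'i \<Rightarrow> complex) \<Rightarrow> ('i \<Rightarrow> 'i \<Rightarrow> complex)" where
  "madd A B = (\<lambda>i k. A i k + B i k)"

definition msmult :: "complex \<Rightarrow> ('i \<Rightarrow> 'i \<Rightarrow> complex) \<Rightarrow> ('i \<Rightarrow> 'i \<Rightarrow> complex)" where
  "msmult c A = (\<lambda>i k. c * A i k)"

definition idm :: "'i \<Rightarrow> 'i \<Rightarrow> complex" where
  "idm = (\<lambda>i k. if i = k then 1 else 0)"

definition kron :: "('i \<Rightarrow> 'i \<Rightarrow> complex) \<Rightarrow> ('j \<Rightarrow> 'j \<Rightarrow> complex) \<Rightarrow> ('i \<times> 'j \<Rightarrow> 'i \<times> 'j \<Rightarrow> complex)" where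
  "kron A B = (\<lambda>(\<alpha>, \<beta>) (\<gamma>, \<delta>). A \<alpha> \<gamma> * B \<beta> \<delta>)"

definition meq :: "'i set \<Rightarrow> ('i \<Rightarrow> 'i \<Rightarrow> complex) \<Rightarrow> ('i \<Rightarrow> 'i \<Rightarrow> complex) \<Rightarrow> bool" where
  "meq I A B = (\<forall>i\<in>I. \<forall>k\<in>I. A i k = B i k)"

definition invertible_on :: "'i set \<Rightarrow> ('i \<Rightarrow> 'i \<Rightarrow> complex) \<Rightarrow> bool" where
  "invertible_on I A = (\<exists>B. meq I (mmul I A B) idm \<and> meq I (mmul I B A) idm)"

section \<open>The matrices X, Z, Y (indices 0..N-1 representing Z/N)\<close>

definition Xm :: "nat \<Rightarrow> nat \<Rightarrow> nat \<Rightarrow> complex" where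
  "Xm N = (\<lambda>i j. dlt N (int i - int j - 1))"

definition Zm :: "nat \<Rightarrow> nat \<Rightarrow> nat \<Rightarrow> complex" where
  "Zm N = (\<lambda>i j. omg N ^ i * dlt N (int i - int j))"

definition Ym :: "nat \<Rightarrow> nat \<Rightarrow> nat \<Rightarrow> complex" where
  "Ym N = msmult (half_pow N 1) (mmul {..<N} (Xm N) (Zm N))"

text \<open>A representation is given by the pair (rho(E), rho(D)); it is then determined
  on the whole algebra. Standard representation with parameters (a,y).\<close>
definition std_rep :: "nat \<Rightarrow> complex \<times> complex \<Rightarrow> (nat \<Rightarrow> nat \<Rightarrow> complex) \<times> (nat \<Rightarrow> nat \<Rightarrow> complex)" where
  "std_rep N p = (case p of (a, y) \<Rightarrow> (msmult (a^2) (Zm N), msmult (a * y) (Xm N)))"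

text \<open>Tensor product via the coproduct: Delta(E) = E (x) E, Delta(D) = E (x) D + D (x) 1.\<close>
definition tensor_rep :: "('i \<Rightarrow> 'i \<Rightarrow> complex) \<times> ('i \<Rightarrow> 'i \<Rightarrow> complex) \<Rightarrow> ('j \<Rightarrow> 'j \<Rightarrow> complex) \<times> ('j \<Rightarrow> 'j \<Rightarrow> complex)
    \<Rightarrow> ('i \<times> 'j \<Rightarrow> 'i \<times> 'j \<Rightarrow> complex) \<times> ('i \<times> 'j \<Rightarrow> 'i \<times> 'j \<Rightarrow> complex)" where
  "tensor_rep r s = (kron (fst r) (fst s), madd (kron (fst r) (snd s)) (kron (snd r) idm))"

text \<open>Cyclic: E and D act invertibly (on the representation space indexed by I).\<close>
definition cyclic_rep :: "'i set \<Rightarrow> ('i \<Rightarrow> 'i \<Rightarrow> complex) \<times> ('i \<Rightarrow> 'i \<Rightarrow> complex) \<Rightarrow> bool" where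
  "cyclic_rep I r = (invertible_on I (fst r) \<and> invertible_on I (snd r))"

definition regular_triple :: "nat \<Rightarrow> complex \<times> complex \<Rightarrow> complex \<times> complex \<Rightarrow> complex \<times> complex \<Rightarrow> bool" where
  "regular_triple N \<rho> \<mu> \<nu> =
    (let I = {..<N}; r = std_rep N \<rho>; m = std_rep N \<mu>; n = std_rep N \<nu> in
       cyclic_rep I r \<and> cyclic_rep I m \<and> cyclic_rep I n \<and>
       cyclic_rep (I \<times> I) (tensor_rep r m) \<and> cyclic_rep (I \<times> I) (tensor_rep m n) \<and>
       cyclic_rep ((I \<times> I) \<times> I) (tensor_rep (tensor_rep r m) n))"

text \<open>rt is the fixed determination of the N-th root.\<close>
definition prod_par :: "(complex \<Rightarrow> complex) \<Rightarrow> nat \<Rightarrow> complex \<times> complex \<Rightarrow> complex \<times> complex \<Rightarrow> complex \<times> complex" where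
  "prod_par rt N p q = (case p of (a1, y1) \<Rightarrow> case q of (a2, y2) \<Rightarrow>
     (a1 * a2, rt (a1 ^ N * y2 ^ N + y1 ^ N * inverse (a2 ^ N))))"

definition cyc_omega :: "nat \<Rightarrow> complex \<Rightarrow> complex \<Rightarrow> complex \<Rightarrow> int \<Rightarrow> complex" where
  "cyc_omega N x y z n = (\<Prod>j\<in>{1..nat (n mod int N)}. y / (z - x * omg N ^ j))"

definition cyc_omega2 :: "nat \<Rightarrow> complex \<Rightarrow> complex \<Rightarrow> complex \<Rightarrow> int \<Rightarrow> int \<Rightarrow> complex" where
  "cyc_omega2 N x y z m n = cyc_omega N x y z (m - n) * half_pow N (n ^ 2)"

definition cut_domain :: "nat \<Rightarrow> real \<Rightarrow> complex set" where
  "cut_domain N \<theta> = {x. \<not> (1 \<le> norm x \<and> (\<exists>k::int. Arg x = \<theta> + 2 * pi * real_of_int k / real N))}"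

text \<open>Analytic continuation from 0 of an N-th root of p on a domain Omega: the (unique)
  holomorphic function f on Omega with f 0 = 1 and f^N = p.\<close>
definition branch :: "nat \<Rightarrow> complex set \<Rightarrow> (complex \<Rightarrow> complex) \<Rightarrow> complex \<Rightarrow> complex" where
  "branch N \<Omega> p = (THE f. f holomorphic_on \<Omega> \<and> f 0 = 1 \<and> (\<forall>x\<in>\<Omega>. f x ^ N = p x))"

definition gpoly :: "nat \<Rightarrow> complex \<Rightarrow> complex" where
  "gpoly N x = (\<Prod>j\<in>{1..N-1}. (1 - x * omg N ^ j) ^ j)"

definition g_fun :: "nat \<Rightarrow> real \<Rightarrow> complex \<Rightarrow> complex" where
  "g_fun N \<theta> = branch N (cut_domain N \<theta>) (gpoly N)"

definition r_fun :: "nat \<Rightarrow> real \<Rightarrow> complex \<Rightarrow> complex" where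
  "r_fun N \<theta> = branch N (cut_domain N \<theta>) (\<lambda>x. 1 - x ^ N)"

text \<open>theta is such that g avoids the cuts: g is analytic on the cut domain.\<close>
definition g_avoids_cuts :: "nat \<Rightarrow> real \<Rightarrow> bool" where
  "g_avoids_cuts N \<theta> = (\<exists>f. f holomorphic_on cut_domain N \<theta> \<and> f 0 = 1 \<and>
      (\<forall>x\<in>cut_domain N \<theta>. f x ^ N = gpoly N x))"

text \<open>g(1): value of (the continuous extension of) g at 1.\<close>
definition g_one :: "nat \<Rightarrow> real \<Rightarrow> complex" where
  "g_one N \<theta> = Lim (at 1 within cut_domain N \<theta>) (g_fun N \<theta>)"

definition h_fun :: "nat \<Rightarrow> real \<Rightarrow> complex \<Rightarrow> complex" where
  "h_fun N \<theta> x = inverse (x ^ ((N - 1) div 2)) * g_fun N \<theta> x / g_one N \<theta>"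

definition sixj_arg :: "(complex \<Rightarrow> complex) \<Rightarrow> nat \<Rightarrow> complex \<times> complex \<Rightarrow> complex \<times> complex \<Rightarrow> complex \<times> complex \<Rightarrow> complex" where
  "sixj_arg rt N \<rho> \<mu> \<nu> =
     (let y\<rho>\<mu> = snd (prod_par rt N \<rho> \<mu>); y\<mu>\<nu> = snd (prod_par rt N \<mu> \<nu>);
          y\<rho>\<mu>\<nu> = snd (prod_par rt N (prod_par rt N \<rho> \<mu>) \<nu>)
      in (y\<rho>\<mu> * y\<mu>\<nu>) / (y\<rho>\<mu>\<nu> * snd \<mu>))"

definition standing_convention :: "nat \<Rightarrow> real \<Rightarrow> (complex \<Rightarrow> complex) \<Rightarrow> complex \<times> complex \<Rightarrow> complex \<times> complex \<Rightarrow> complex \<times> complex \<Rightarrow> bool" where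
  "standing_convention N \<theta> rt \<rho> \<mu> \<nu> =
     (let y\<rho>\<mu>\<nu> = snd (prod_par rt N (prod_par rt N \<rho> \<mu>) \<nu>) in
       - (snd \<rho> * snd \<nu>) / (y\<rho>\<mu>\<nu> * snd \<mu>) = r_fun N \<theta> (sixj_arg rt N \<rho> \<mu> \<nu>))"

definition sixj :: "nat \<Rightarrow> real \<Rightarrow> (complex \<Rightarrow> complex) \<Rightarrow> complex \<times> complex \<Rightarrow> complex \<times> complex \<Rightarrow> complex \<times> complex
    \<Rightarrow> (nat \<times> nat \<Rightarrow> nat \<times> nat \<Rightarrow> complex)" where
  "sixj N \<theta> rt \<rho> \<mu> \<nu> =
     (let y\<rho>\<mu> = snd (prod_par rt N \<rho> \<mu>); y\<mu>\<nu> = snd (prod_par rt N \<mu> \<nu>);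
          y\<rho>\<mu>\<nu> = snd (prod_par rt N (prod_par rt N \<rho> \<mu>) \<nu>)
      in (\<lambda>(\<alpha>, \<beta>) (\<gamma>, \<delta>).
            h_fun N \<theta> (sixj_arg rt N \<rho> \<mu> \<nu>) * omg N ^ (\<alpha> * \<delta>) *
            cyc_omega2 N (y\<rho>\<mu>\<nu> * snd \<mu>) (snd \<rho> * snd \<nu>) (y\<rho>\<mu> * y\<mu>\<nu>) (int \<gamma>) (int \<alpha>) *
            dlt N (int \<gamma> + int \<delta> - int \<beta>)))"

end

theory Submission
  imports Defs
begin

text \<open>
  The matrices \<open>Z\<^sub>1, Z\<^sub>2, Y\<^sub>1, Y\<^sub>2\<close> and their products are monomial: each column q has a
  single nonzero entry \<open>\<phi> q\<close>, in row \<open>\<sigma> q\<close> for a permutation \<open>\<sigma>\<close> of the index set. Hence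
  \<open>R M = M' R\<close> for monomial \<open>M, M'\<close> amounts to the entrywise identity
  \<open>R (\<sigma>' p) (\<sigma> k) \<phi> k = \<phi>' p R p k\<close>. The entry of \<open>R\<close> at \<open>(\<alpha>,\<beta>),(\<gamma>,\<delta>)\<close> is
  \<open>K W(\<gamma>-\<alpha>) \<delta>(\<gamma>+\<delta>-\<beta>) \<omega>^(\<alpha>\<delta> + \<alpha>\<^sup>2/2)\<close> with \<open>W\<close> N-periodic, and it depends on the indices
  only modulo N. The three shifts leave \<open>W\<close> and the support condition \<open>\<gamma>+\<delta> \<equiv> \<beta>\<close> unchanged, and
  on that support the powers of \<open>\<omega>\<close> agree modulo N; for \<open>C\<^sub>2\<close> this uses \<open>2 (P+1) \<equiv> 1\<close>.
  Neither \<open>h\<close> nor the particular form of \<open>\<omega>(x,y,z|n)\<close> matters beyond periodicity.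
\<close>

lemma omg_nonzero [simp]: "omg N \<noteq> 0"
  by (simp add: omg_def)

lemma omg_pow_N: "0 < N \<Longrightarrow> omg N ^ N = 1"
  unfolding omg_def Complex.DeMoivre by simp

lemma omg_powi_add_mult: "0 < N \<Longrightarrow> omg N powi (k + int N * m) = omg N powi k"
  by (simp add: power_int_add power_int_mult omg_pow_N)

lemma omg_powi_cong:
  assumes "0 < N" "k mod int N = l mod int N"
  shows "omg N powi k = omg N powi l"
proof -
  obtain m where "k = l + int N * m"
    using assms(2) by (metis mod_eq_dvd_iff dvd_def diff_add_cancel add.commute)
  then show ?thesis
    using omg_powi_add_mult[OF assms(1)] by simp
qed

definition half_exp :: "nat \<Rightarrow> nat" where
  "half_exp N = (N - 1) div 2 + 1"

lemma two_half_exp: "odd N \<Longrightarrow> 2 * half_exp N = N + 1"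
  unfolding half_exp_def by presburger

lemma dlt_cong: "x mod int N = y mod int N \<Longrightarrow> dlt N x = dlt N y"
  by (simp add: dlt_def)

lemma dlt_nonzero_imp_dvd: "dlt N x \<noteq> 0 \<Longrightarrow> int N dvd x"
  by (simp add: dlt_def dvd_eq_mod_eq_0 split: if_splits)

lemma dlt_diff: "i < N \<Longrightarrow> j < N \<Longrightarrow> dlt N (int i - int j) = (if i = j then 1 else 0)"
proof -
  assume "i < N" "j < N"
  have "(int i - int j) mod int N = 0 \<longleftrightarrow> int i mod int N = int j mod int N"
    by (simp add: mod_eq_dvd_iff dvd_eq_mod_eq_0)
  also have "\<dots> \<longleftrightarrow> i = j"
    using \<open>i < N\<close> \<open>j < N\<close> by simp
  finally show ?thesis
    by (simp add: dlt_def)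
qed

definition succ_mod :: "nat \<Rightarrow> nat \<Rightarrow> nat" where
  "succ_mod N j = Suc j mod N"

lemma int_succ_mod_mod: "int (succ_mod N j) mod int N = (int j + 1) mod int N"
  by (simp add: succ_mod_def zmod_int ac_simps)

lemma bij_succ_mod: "0 < N \<Longrightarrow> bij_betw (succ_mod N) {..<N} {..<N}"
proof -
  assume "0 < N"
  have inj: "inj_on (succ_mod N) {..<N}"
    by (auto simp: inj_on_def succ_mod_def mod_Suc split: if_splits)
  have "succ_mod N ` {..<N} \<subseteq> {..<N}"
    using \<open>0 < N\<close> by (auto simp: succ_mod_def)
  with inj show ?thesis
    by (simp add: bij_betw_def endo_inj_surj)
qed

definition monomial_on :: "'i set \<Rightarrow> ('i \<Rightarrow> 'i) \<Rightarrow> ('i \<Rightarrow> complex) \<Rightarrow> ('i \<Rightarrow> 'i \<Rightarrow> complex) \<Rightarrow> bool" where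
  "monomial_on I \<sigma> \<phi> M \<longleftrightarrow> (\<forall>p\<in>I. \<forall>q\<in>I. M p q = (if p = \<sigma> q then \<phi> q else 0))"

lemma mmul_monomial_right:
  assumes "finite I" "monomial_on I \<sigma> \<phi> M" "k \<in> I" "\<sigma> k \<in> I"
  shows "mmul I A M i k = A i (\<sigma> k) * \<phi> k"
proof -
  have "mmul I A M i k = (\<Sum>j\<in>I. if \<sigma> k = j then A i j * \<phi> k else 0)"
    unfolding mmul_def by (rule sum.cong) (use assms(2,3) in \<open>auto simp: monomial_on_def\<close>)
  then show ?thesis
    using assms(1,4) by simp
qed

lemma mmul_monomial_left:
  assumes "finite I" "monomial_on I \<sigma> \<phi> M" "inj_on \<sigma> I" "p \<in> I" "\<sigma> p \<in> I"
  shows "mmul I M B (\<sigma> p) k = \<phi> p * B p k"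
proof -
  have "mmul I M B (\<sigma> p) k = (\<Sum>j\<in>I. if p = j then \<phi> p * B p k else 0)"
    unfolding mmul_def by (rule sum.cong) (use assms(2-5) in \<open>auto simp: monomial_on_def inj_on_def\<close>)
  then show ?thesis
    using assms(1,4) by simp
qed

lemma monomial_on_mmul:
  assumes "finite I" "monomial_on I \<sigma> \<phi> A" "monomial_on I \<tau> \<psi> B" "\<tau> ` I \<subseteq> I"
  shows "monomial_on I (\<sigma> \<circ> \<tau>) (\<lambda>q. \<phi> (\<tau> q) * \<psi> q) (mmul I A B)"
  unfolding monomial_on_def
proof (intro ballI)
  fix p q assume "p \<in> I" "q \<in> I"
  then have "mmul I A B p q = A p (\<tau> q) * \<psi> q"
    using assms by (auto intro: mmul_monomial_right)
  then show "mmul I A B p q = (if p = (\<sigma> \<circ> \<tau>) q then \<phi> (\<tau> q) * \<psi> q else 0)"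
    using assms(2,4) \<open>p \<in> I\<close> \<open>q \<in> I\<close> by (auto simp: monomial_on_def)
qed

lemma monomial_on_kron:
  assumes "monomial_on I \<sigma> \<phi> A" "monomial_on J \<tau> \<psi> B"
  shows "monomial_on (I \<times> J) (map_prod \<sigma> \<tau>) (\<lambda>(x, y). \<phi> x * \<psi> y) (kron A B)"
  using assms by (auto simp: monomial_on_def kron_def)

lemma monomial_on_msmult:
  "monomial_on I \<sigma> \<phi> M \<Longrightarrow> monomial_on I \<sigma> (\<lambda>q. c * \<phi> q) (msmult c M)"
  by (simp add: monomial_on_def msmult_def)

lemma monomial_on_idm: "monomial_on I id (\<lambda>_. 1) idm"
  by (simp add: monomial_on_def idm_def)

lemma meq_mmul_monomial_intertwine:
  assumes "finite I" "monomial_on I \<sigma> \<phi> M" "monomial_on I \<sigma>' \<phi>' M'"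
    and "\<sigma> ` I \<subseteq> I" "bij_betw \<sigma>' I I"
    and "\<And>p k. p \<in> I \<Longrightarrow> k \<in> I \<Longrightarrow> R (\<sigma>' p) (\<sigma> k) * \<phi> k = \<phi>' p * R p k"
  shows "meq I (mmul I R M) (mmul I M' R)"
  unfolding meq_def
proof (intro ballI)
  fix i k assume "i \<in> I" "k \<in> I"
  then obtain p where p: "p \<in> I" "i = \<sigma>' p"
    using assms(5) by (auto simp: bij_betw_def)
  have "mmul I R M i k = R (\<sigma>' p) (\<sigma> k) * \<phi> k"
    using assms(1,2,4) \<open>k \<in> I\<close> p by (auto intro: mmul_monomial_right)
  also have "\<dots> = \<phi>' p * R p k"
    using assms(6) p(1) \<open>k \<in> I\<close> .
  also have "\<dots> = mmul I M' R i k"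
    using assms(1,3,5) p by (auto simp: bij_betw_def intro!: mmul_monomial_left[symmetric])
  finally show "mmul I R M i k = mmul I M' R i k" .
qed

lemma monomial_on_Zm: "monomial_on {..<N} id (\<lambda>j. omg N ^ j) (Zm N)"
  by (simp add: monomial_on_def Zm_def dlt_diff)

lemma monomial_on_Xm: "monomial_on {..<N} (succ_mod N) (\<lambda>_. 1) (Xm N)"
proof -
  have "dlt N (int i - int j - 1) = dlt N (int i - int (succ_mod N j))" for i j
    by (rule dlt_cong) (metis diff_diff_eq int_succ_mod_mod mod_diff_right_eq)
  then show ?thesis
    by (simp add: monomial_on_def Xm_def dlt_diff succ_mod_def)
qed

lemma monomial_on_Ym:
  "0 < N \<Longrightarrow> monomial_on {..<N} (succ_mod N) (\<lambda>j. omg N ^ half_exp N * omg N ^ j) (Ym N)"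
  using monomial_on_msmult[OF monomial_on_mmul[OF _ monomial_on_Xm monomial_on_Zm]]
  by (simp add: Ym_def half_pow_def half_exp_def)

definition sixj_entry :: "nat \<Rightarrow> complex \<Rightarrow> (int \<Rightarrow> complex) \<Rightarrow> int \<Rightarrow> int \<Rightarrow> int \<Rightarrow> int \<Rightarrow> complex" where
  "sixj_entry N K W \<alpha> \<beta> \<gamma> \<delta> =
     K * W (\<gamma> - \<alpha>) * dlt N (\<gamma> + \<delta> - \<beta>) * omg N powi (\<alpha> * \<delta> + int (half_exp N) * \<alpha>\<^sup>2)"

definition sixj_matrix :: "nat \<Rightarrow> complex \<Rightarrow> (int \<Rightarrow> complex) \<Rightarrow> nat \<times> nat \<Rightarrow> nat \<times> nat \<Rightarrow> complex" where
  "sixj_matrix N K W = (\<lambda>(\<alpha>, \<beta>) (\<gamma>, \<delta>). sixj_entry N K W (int \<alpha>) (int \<beta>) (int \<gamma>) (int \<delta>))"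

lemma sixj_eq_sixj_matrix:
  "sixj N \<theta> rt \<rho> \<mu> \<nu> = sixj_matrix N (h_fun N \<theta> (sixj_arg rt N \<rho> \<mu> \<nu>))
     (cyc_omega N (snd (prod_par rt N (prod_par rt N \<rho> \<mu>) \<nu>) * snd \<mu>) (snd \<rho> * snd \<nu>)
        (snd (prod_par rt N \<rho> \<mu>) * snd (prod_par rt N \<mu> \<nu>)))"
proof -
  have "half_pow N r = (omg N ^ half_exp N) powi r" for r
    by (simp only: half_pow_def half_exp_def)
  then have "half_pow N r = omg N powi (int (half_exp N) * r)" for r
    by (simp add: power_int_mult)
  then show ?thesis
    by (auto simp: fun_eq_iff sixj_def sixj_matrix_def sixj_entry_def cyc_omega2_def Let_def
        power_int_add mult_ac simp flip: power_int_of_nat)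
qed

lemma cyc_omega_mod: "cyc_omega N x y z (n mod int N) = cyc_omega N x y z n"
  by (simp add: cyc_omega_def)

lemma sixj_entry_mod_cong:
  assumes "0 < N" "\<And>n. W (n mod int N) = W n"
    and "\<alpha> mod int N = \<alpha>' mod int N" "\<beta> mod int N = \<beta>' mod int N"
    and "\<gamma> mod int N = \<gamma>' mod int N" "\<delta> mod int N = \<delta>' mod int N"
  shows "sixj_entry N K W \<alpha> \<beta> \<gamma> \<delta> = sixj_entry N K W \<alpha>' \<beta>' \<gamma>' \<delta>'"
proof -
  have "\<alpha>\<^sup>2 mod int N = \<alpha>'\<^sup>2 mod int N"
    by (metis assms(3) power_mod)
  then have "omg N powi (\<alpha> * \<delta> + int (half_exp N) * \<alpha>\<^sup>2) =
      omg N powi (\<alpha>' * \<delta>' + int (half_exp N) * \<alpha>'\<^sup>2)"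
    using assms(1,3,6) by (intro omg_powi_cong mod_add_cong mod_mult_cong refl)
  moreover have "W (\<gamma> - \<alpha>) = W (\<gamma>' - \<alpha>')"
    using assms(2,3,5) mod_diff_cong by metis
  moreover have "dlt N (\<gamma> + \<delta> - \<beta>) = dlt N (\<gamma>' + \<delta>' - \<beta>')"
    using assms(4-6) by (intro dlt_cong mod_diff_cong mod_add_cong)
  ultimately show ?thesis
    by (simp add: sixj_entry_def)
qed

lemma sixj_entry_shift:
  assumes "0 < N" "W (\<gamma>' - \<alpha>') = W (\<gamma> - \<alpha>)" "\<gamma>' + \<delta>' - \<beta>' = \<gamma> + \<delta> - \<beta>"
    and "\<alpha>' * \<delta>' + int (half_exp N) * \<alpha>'\<^sup>2 + s =
      t + (\<alpha> * \<delta> + int (half_exp N) * \<alpha>\<^sup>2) + (\<gamma> + \<delta> - \<beta>) + int N * v"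
  shows "sixj_entry N K W \<alpha>' \<beta>' \<gamma>' \<delta>' * omg N powi s = omg N powi t * sixj_entry N K W \<alpha> \<beta> \<gamma> \<delta>"
proof (cases "dlt N (\<gamma> + \<delta> - \<beta>) = 0")
  case True
  then show ?thesis
    by (simp add: sixj_entry_def assms(3))
next
  case False
  then obtain m where "\<gamma> + \<delta> - \<beta> = int N * m"
    using dlt_nonzero_imp_dvd by blast
  with assms(4) have "\<alpha>' * \<delta>' + int (half_exp N) * \<alpha>'\<^sup>2 + s =
      t + (\<alpha> * \<delta> + int (half_exp N) * \<alpha>\<^sup>2) + int N * m + int N * v"
    by linarith
  then have "omg N powi (\<alpha>' * \<delta>' + int (half_exp N) * \<alpha>'\<^sup>2 + s) =
      omg N powi (t + (\<alpha> * \<delta> + int (half_exp N) * \<alpha>\<^sup>2))"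
    by (simp add: omg_powi_add_mult[OF assms(1)])
  then show ?thesis
    by (simp add: sixj_entry_def assms(2,3) power_int_add mult_ac)
qed

lemma sixj_matrix_commutes_Z1Y2:
  assumes "0 < N" "\<And>n. W (n mod int N) = W n"
  defines "I \<equiv> {..<N} \<times> {..<N}"
  shows "meq I (mmul I (sixj_matrix N K W) (mmul I (kron (Zm N) idm) (kron idm (Ym N))))
      (mmul I (mmul I (kron (Zm N) idm) (kron idm (Ym N))) (sixj_matrix N K W))"
proof -
  have bij: "bij_betw (map_prod id (succ_mod N)) I I"
    unfolding I_def using assms(1) by (intro bij_betw_map_prod bij_betw_id bij_succ_mod)
  then have sub: "map_prod id (succ_mod N) ` I \<subseteq> I"
    by (simp add: bij_betw_def)
  note M = monomial_on_mmul[OF _ monomial_on_kron[OF monomial_on_Zm monomial_on_idm]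
      monomial_on_kron[OF monomial_on_idm monomial_on_Ym[OF assms(1)]] sub[unfolded I_def],
      folded I_def, unfolded map_prod.id id_comp]
  have entry: "sixj_matrix N K W (a, succ_mod N b) (c, succ_mod N d) * (omg N ^ c * omg N ^ half_exp N * omg N ^ d) =
      omg N ^ a * omg N ^ half_exp N * omg N ^ b * sixj_matrix N K W (a, b) (c, d)" for a b c d
  proof -
    have "sixj_entry N K W (int a) (int b + 1) (int c) (int d + 1) * omg N powi (int c + int (half_exp N) + int d) =
        omg N powi (int a + int (half_exp N) + int b) * sixj_entry N K W (int a) (int b) (int c) (int d)"
      by (rule sixj_entry_shift[where v = 0]) (simp_all add: assms(1) algebra_simps power2_eq_square)
    moreover have "sixj_matrix N K W (a, succ_mod N b) (c, succ_mod N d) =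
        sixj_entry N K W (int a) (int b + 1) (int c) (int d + 1)"
      unfolding sixj_matrix_def using assms(1,2)
      by (auto intro!: sixj_entry_mod_cong simp: int_succ_mod_mod)
    ultimately show ?thesis
      by (simp add: sixj_matrix_def power_int_add mult_ac)
  qed
  show ?thesis
    by (rule meq_mmul_monomial_intertwine[OF _ M M sub bij]) (use entry in \<open>auto simp: I_def\<close>)
qed

lemma sixj_matrix_commutes_Y1:
  assumes "odd N" "0 < N" "\<And>n. W (n mod int N) = W n"
  defines "I \<equiv> {..<N} \<times> {..<N}"
  shows "meq I (mmul I (sixj_matrix N K W) (kron (Ym N) idm))
      (mmul I (mmul I (kron (Ym N) idm) (kron idm (Ym N))) (sixj_matrix N K W))"
proof -
  have "bij_betw (map_prod (succ_mod N) id) I I"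
    unfolding I_def using assms(2) by (intro bij_betw_map_prod bij_betw_id bij_succ_mod)
  then have sub1: "map_prod (succ_mod N) id ` I \<subseteq> I"
    by (simp add: bij_betw_def)
  have bij12: "bij_betw (map_prod (succ_mod N) (succ_mod N)) I I"
    unfolding I_def using assms(2) by (intro bij_betw_map_prod bij_betw_id bij_succ_mod)
  have "bij_betw (map_prod id (succ_mod N)) I I"
    unfolding I_def using assms(2) by (intro bij_betw_map_prod bij_betw_id bij_succ_mod)
  then have "map_prod id (succ_mod N) ` I \<subseteq> I"
    by (simp add: bij_betw_def)
  note M' = monomial_on_mmul[OF _ monomial_on_kron[OF monomial_on_Ym[OF assms(2)] monomial_on_idm]
      monomial_on_kron[OF monomial_on_idm monomial_on_Ym[OF assms(2)]] this[unfolded I_def],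
      folded I_def, unfolded map_prod_compose[symmetric] comp_id id_comp]
  note M = monomial_on_kron[OF monomial_on_Ym[OF assms(2)] monomial_on_idm[of "{..<N}"], folded I_def]
  have N_eq: "int N = 2 * int (half_exp N) - 1"
    using two_half_exp[OF assms(1)] by linarith
  have entry: "sixj_matrix N K W (succ_mod N a, succ_mod N b) (succ_mod N c, d) * (omg N ^ half_exp N * omg N ^ c) =
      omg N ^ half_exp N * omg N ^ a * (omg N ^ half_exp N * omg N ^ b) * sixj_matrix N K W (a, b) (c, d)"
    for a b c d
  proof -
    have "sixj_entry N K W (int a + 1) (int b + 1) (int c + 1) (int d) * omg N powi (int (half_exp N) + int c) =
        omg N powi (int (half_exp N) + int a + (int (half_exp N) + int b)) *
        sixj_entry N K W (int a) (int b) (int c) (int d)"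
      by (rule sixj_entry_shift[where v = "int a"]) (simp_all add: assms(2) N_eq algebra_simps power2_eq_square)
    then have "sixj_entry N K W (int a + 1) (int b + 1) (int c + 1) (int d) * (omg N ^ half_exp N * omg N ^ c) =
        omg N ^ half_exp N * omg N ^ a * (omg N ^ half_exp N * omg N ^ b) *
        sixj_entry N K W (int a) (int b) (int c) (int d)"
      by (simp only: power_int_add omg_nonzero simp_thms power_int_of_nat)
    moreover have "sixj_matrix N K W (succ_mod N a, succ_mod N b) (succ_mod N c, d) =
        sixj_entry N K W (int a + 1) (int b + 1) (int c + 1) (int d)"
      unfolding sixj_matrix_def using assms(2,3)
      by (auto intro!: sixj_entry_mod_cong simp: int_succ_mod_mod)
    ultimately show ?thesis
      by (simp add: sixj_matrix_def power_int_add mult_ac)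
  qed
  show ?thesis
    by (rule meq_mmul_monomial_intertwine[OF _ M M' sub1 bij12]) (use entry in \<open>auto simp: I_def\<close>)
qed

lemma sixj_matrix_commutes_Z1Z2:
  assumes "0 < N"
  defines "I \<equiv> {..<N} \<times> {..<N}"
  shows "meq I (mmul I (sixj_matrix N K W) (mmul I (kron (Zm N) idm) (kron idm (Zm N))))
      (mmul I (kron idm (Zm N)) (sixj_matrix N K W))"
proof -
  have "map_prod id id ` I \<subseteq> I"
    by (simp add: map_prod.id)
  note M = monomial_on_mmul[OF _ monomial_on_kron[OF monomial_on_Zm monomial_on_idm]
      monomial_on_kron[OF monomial_on_idm monomial_on_Zm] this[unfolded I_def],
      folded I_def, unfolded map_prod.id id_comp]
  note M' = monomial_on_kron[OF monomial_on_idm[of "{..<N}"] monomial_on_Zm[of N], folded I_def, unfolded map_prod.id]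
  have entry: "sixj_matrix N K W (a, b) (c, d) * (omg N ^ c * omg N ^ d) = omg N ^ b * sixj_matrix N K W (a, b) (c, d)"
    for a b c d
  proof -
    have "sixj_entry N K W (int a) (int b) (int c) (int d) * omg N powi (int c + int d) =
        omg N powi (int b) * sixj_entry N K W (int a) (int b) (int c) (int d)"
      by (rule sixj_entry_shift[where v = 0]) (simp_all add: assms(1) algebra_simps)
    then show ?thesis
      by (simp add: sixj_matrix_def power_int_add mult_ac)
  qed
  show ?thesis
    by (rule meq_mmul_monomial_intertwine[OF _ M M' _ bij_betw_id]) (use entry in \<open>auto simp: I_def\<close>)
qed

theorem lemma6p10:
  fixes N :: nat and \<theta> :: real and rt :: "complex \<Rightarrow> complex"
    and a\<rho> y\<rho> a\<mu> y\<mu> a\<nu> y\<nu> :: complex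
  assumes "odd N" and "3 \<le> N"
    and "\<forall>u. rt u ^ N = u"
    and "a\<rho> \<noteq> 0" "y\<rho> \<noteq> 0" "a\<mu> \<noteq> 0" "y\<mu> \<noteq> 0" "a\<nu> \<noteq> 0" "y\<nu> \<noteq> 0"
    and "regular_triple N (a\<rho>, y\<rho>) (a\<mu>, y\<mu>) (a\<nu>, y\<nu>)"
    and "g_avoids_cuts N \<theta>"
    and "sixj_arg rt N (a\<rho>, y\<rho>) (a\<mu>, y\<mu>) (a\<nu>, y\<nu>) \<in> cut_domain N \<theta>"
    and "standing_convention N \<theta> rt (a\<rho>, y\<rho>) (a\<mu>, y\<mu>) (a\<nu>, y\<nu>)"
  shows "let I = {..<N}; I2 = I \<times> I; R = sixj N \<theta> rt (a\<rho>, y\<rho>) (a\<mu>, y\<mu>) (a\<nu>, y\<nu>);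
             Z1 = kron (Zm N) idm; Z2 = kron idm (Zm N);
             Y1 = kron (Ym N) idm; Y2 = kron idm (Ym N)
         in meq I2 (mmul I2 R (mmul I2 Z1 Y2)) (mmul I2 (mmul I2 Z1 Y2) R) \<and>
            meq I2 (mmul I2 R Y1) (mmul I2 (mmul I2 Y1 Y2) R) \<and>
            meq I2 (mmul I2 R (mmul I2 Z1 Z2)) (mmul I2 Z2 R)"
proof -
  have "0 < N"
    using assms(2) by simp
  show ?thesis
    unfolding Let_def sixj_eq_sixj_matrix
    by (intro conjI sixj_matrix_commutes_Z1Y2 sixj_matrix_commutes_Y1 sixj_matrix_commutes_Z1Z2
        assms(1) \<open>0 < N\<close> cyc_omega_mod)
qed

end
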